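(* Let $\mathbf A$ be a complete residuated lattice, $I$ a set, and $O\colon A^I\to A^I$ an interior operator satisfying $d^I\cdot O(x)\le O(d^I\cdot x)$ for all $d\in A$ and $x\in A^I$. Then there exist a set $J$ and a fuzzy relation $R\colon I\times J\to A$ such that $O(x)=\rho_R(\phi_R(x))$ for all $x\in A^I$. (One may take $J=\{O(a)\mid a\in A^I\}$ and $R(i,O(a))=O(a)(i)$.)
   Context: A residuated lattice is an algebra $\mathbf A=(A;\vee,\wedge,\cdot,\rightarrow,0,1)$ such that $(A;\vee,\wedge,0,1)$ is a bounded lattice, $(A;\cdot,1)$ is a commutative monoid, and $x\cdot y\le z$ iff $x\le y\rightarrow z$; complete if the lattice reduct is complete. $A^K$ carries componentwise operations and order; $d^K$ is the constant element with value $d\in A$. An interior operator is a monotone $O$ with $O(x)\le x$ and $O(O(x))=O(x)$. For $R\colon I\times J\to A$: $\phi_R\colon A^I\to A^J$, $\phi_R(x)(j)=\bigwedge_{i\in I}(R(i,j)\rightarrow x(i))$; $\rho_R\colon A^J\to A^I$, $\rho_R(y)(i)=\bigvee_{j\in J}(R(i,j)\cdot y(j))$. *)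

theory Defs
  imports Main
begin

text \<open>A complete residuated lattice on a complete lattice type 'a: the lattice
 bounds are bot (0) and top (1); mult is a commutative monoid with unit top,
 and imp is its residuum.\<close>
definition complete_residuated_lattice ::
  "('a::complete_lattice \<Rightarrow> 'a \<Rightarrow> 'a) \<Rightarrow> ('a \<Rightarrow> 'a \<Rightarrow> 'a) \<Rightarrow> bool" where
  "complete_residuated_lattice mult imp \<longleftrightarrow>
     (\<forall>x y z. mult (mult x y) z = mult x (mult y z)) \<and>
     (\<forall>x y. mult x y = mult y x) \<and>
     (\<forall>x. mult x top = x) \<and>
     (\<forall>x y z. mult x y \<le> z \<longleftrightarrow> x \<le> imp y z)"

definition interior_operator :: "('b::order \<Rightarrow> 'b) \<Rightarrow> bool" where
  "interior_operator Op \<longleftrightarrow> mono Op \<and> (\<forall>x. Op x \<le> x) \<and> (\<forall>x. Op (Op x) = Op x)"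

text \<open>phi_R : A^I \<rightarrow> A^J and rho_R : A^J \<rightarrow> A^I for R : I \<times> J \<rightarrow> A,
 with I the universe of type 'i and J an arbitrary set of type 'j.\<close>
definition phi_R ::
  "('a::complete_lattice \<Rightarrow> 'a \<Rightarrow> 'a) \<Rightarrow> ('i \<Rightarrow> 'j \<Rightarrow> 'a) \<Rightarrow> ('i \<Rightarrow> 'a) \<Rightarrow> 'j \<Rightarrow> 'a" where
  "phi_R imp R x j = (INF i. imp (R i j) (x i))"

definition rho_R ::
  "('a::complete_lattice \<Rightarrow> 'a \<Rightarrow> 'a) \<Rightarrow> ('i \<Rightarrow> 'j \<Rightarrow> 'a) \<Rightarrow> 'j set \<Rightarrow> ('j \<Rightarrow> 'a) \<Rightarrow> 'i \<Rightarrow> 'a" where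
  "rho_R mult R J y i = (SUP j\<in>J. mult (R i j) (y j))"

end

theory Submission
  imports Defs
begin

(* Take J = {Op a | a} (the fixed points of Op) and the evaluation relation
   R i y = y i.  For x in A^I and y in J the value phi_R(x)(y) is the degree
   INF_k (y k -> x k) to which y is included in x; rho_R then forms
   SUP_{y in J} y i * phi_R(x)(y).

   - Op x <= rho(phi x): Op x itself lies in J and is below x, so its
     inclusion degree in x is top and it contributes the term Op x i.
   - rho(phi x) <= Op x: for y = Op y in J and d = phi_R(x)(y), residuation
     gives d * y <= x, so by shift compatibility and monotonicity
     d * y i = d * Op y i <= Op (d * y) i <= Op x i. *)

definition eval_rel :: "'i \<Rightarrow> ('i \<Rightarrow> 'a) \<Rightarrow> 'a" where
  "eval_rel i y = y i"

lemma residuation_left: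
  assumes "complete_residuated_lattice mult imp"
  shows "mult d y \<le> z \<longleftrightarrow> d \<le> imp y z"
  using assms unfolding complete_residuated_lattice_def by metis

lemma phi_eval_top:
  fixes mult imp :: "'a::complete_lattice \<Rightarrow> 'a \<Rightarrow> 'a"
  assumes crl: "complete_residuated_lattice mult imp"
    and "y \<le> x"
  shows "phi_R imp eval_rel x y = top"
proof -
  have "top \<le> imp (y k) (x k)" for k
  proof -
    have "mult top (y k) = y k"
      using crl unfolding complete_residuated_lattice_def by metis
    also have "\<dots> \<le> x k" using \<open>y \<le> x\<close> by (simp add: le_fun_def)
    finally show ?thesis using residuation_left[OF crl] by blast
  qed
  then show ?thesis
    unfolding phi_R_def eval_rel_def by (simp add: top_le INF_greatest)
qed

lemma member_below_rho_phi:
  fixes mult imp :: "'a::complete_lattice \<Rightarrow> 'a \<Rightarrow> 'a"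
  assumes crl: "complete_residuated_lattice mult imp"
    and "y \<in> J" and "y \<le> x"
  shows "y \<le> rho_R mult eval_rel J (phi_R imp eval_rel x)"
proof (rule le_funI)
  fix i
  have unit: "mult (y i) top = y i"
    using crl unfolding complete_residuated_lattice_def by metis
  have "y i = mult (eval_rel i y) (phi_R imp eval_rel x y)"
    using phi_eval_top[OF crl \<open>y \<le> x\<close>] unit by (simp add: eval_rel_def)
  also have "\<dots> \<le> rho_R mult eval_rel J (phi_R imp eval_rel x) i"
    unfolding rho_R_def using \<open>y \<in> J\<close> by (rule SUP_upper)
  finally show "y i \<le> rho_R mult eval_rel J (phi_R imp eval_rel x) i" .
qed

lemma phi_scaled_below:
  fixes mult imp :: "'a::complete_lattice \<Rightarrow> 'a \<Rightarrow> 'a"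
  assumes crl: "complete_residuated_lattice mult imp"
  shows "(\<lambda>k. mult (phi_R imp eval_rel x y) (y k)) \<le> x"
proof (rule le_funI)
  fix k
  have "phi_R imp eval_rel x y \<le> imp (y k) (x k)"
    unfolding phi_R_def eval_rel_def by (rule INF_lower) simp
  then show "mult (phi_R imp eval_rel x y) (y k) \<le> x k"
    using residuation_left[OF crl] by blast
qed

lemma rho_phi_below:
  fixes mult imp :: "'a::complete_lattice \<Rightarrow> 'a \<Rightarrow> 'a"
  assumes crl: "complete_residuated_lattice mult imp"
    and mono: "mono Op"
    and shift: "\<forall>d x i. mult d (Op x i) \<le> Op (\<lambda>k. mult d (x k)) i"
    and fixed: "\<And>y. y \<in> J \<Longrightarrow> Op y = y"
  shows "rho_R mult eval_rel J (phi_R imp eval_rel x) \<le> Op x"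
proof (rule le_funI)
  fix i
  have comm: "\<And>a b. mult a b = mult b a"
    using crl unfolding complete_residuated_lattice_def by metis
  have "mult (eval_rel i y) (phi_R imp eval_rel x y) \<le> Op x i" if "y \<in> J" for y
  proof -
    define d where "d = phi_R imp eval_rel x y"
    have "mult (eval_rel i y) d = mult d (Op y i)"
      using fixed[OF that] by (simp add: eval_rel_def comm)
    also have "\<dots> \<le> Op (\<lambda>k. mult d (y k)) i" using shift by blast
    also have "\<dots> \<le> Op x i"
      using monoD[OF mono phi_scaled_below[OF crl]] by (simp add: d_def le_fun_def)
    finally show ?thesis by (simp add: d_def)
  qed
  then show "rho_R mult eval_rel J (phi_R imp eval_rel x) i \<le> Op x i"
    unfolding rho_R_def by (rule SUP_least)
qed

theorem theorem4:
  fixes mult imp :: "'a::complete_lattice \<Rightarrow> 'a \<Rightarrow> 'a"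
    and Op :: "('i \<Rightarrow> 'a) \<Rightarrow> ('i \<Rightarrow> 'a)"
  assumes "complete_residuated_lattice mult imp"
    and "interior_operator Op"
    and "\<forall>d x i. mult d (Op x i) \<le> Op (\<lambda>k. mult d (x k)) i"
  shows "\<exists>(J :: ('i \<Rightarrow> 'a) set) (R :: 'i \<Rightarrow> ('i \<Rightarrow> 'a) \<Rightarrow> 'a).
           \<forall>x. Op x = rho_R mult R J (phi_R imp R x)"
proof -
  have mono: "mono Op" and contr: "\<And>x. Op x \<le> x" and idem: "\<And>x. Op (Op x) = Op x"
    using assms(2) unfolding interior_operator_def by auto
  have "Op x = rho_R mult eval_rel (range Op) (phi_R imp eval_rel x)" for x
  proof (rule antisym)
    show "Op x \<le> rho_R mult eval_rel (range Op) (phi_R imp eval_rel x)"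
      using member_below_rho_phi[OF assms(1) _ contr] by blast
    show "rho_R mult eval_rel (range Op) (phi_R imp eval_rel x) \<le> Op x"
      using rho_phi_below[OF assms(1) mono assms(3)] idem by blast
  qed
  then show ?thesis by blast
qed

end
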